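(* Let $\beta>0$ and let $(\lambda_n)_{n\in\mathbb{N}_0}$ be complex numbers with $\limsup_{n\to\infty}|\lambda_n|/n\le\beta$. Let $(a_n)_{n\in\mathbb{N}_0}$ be complex numbers and define $R^*\in[0,\infty]$ by $\frac{1}{R^*}=\limsup_{n\to\infty}\sqrt[n]{|a_n|/n!}$. If $R^*>0$, then for every $x_0\in\mathbb{C}$ the series $\sum_{n=0}^\infty a_n\Phi_{\Lambda_n}(z-x_0)$ converges absolutely and uniformly on compact subsets of the open disc with center $x_0$ and radius $\frac1\beta\ln(1+\beta R^* )$ (interpreted as $\infty$ if $R^*=\infty$).
   Context: For $\lambda_0,\dots,\lambda_n\in\mathbb{C}$ the fundamental function is the entire function $\Phi_{(\lambda_0,\dots,\lambda_n)}(z)=\frac{1}{2\pi i}\int_{|w|=R}\frac{e^{zw}}{(w-\lambda_0)\cdots(w-\lambda_n)}\,dw$, where $R>\max_j|\lambda_j|$ and the circle is positively oriented. For a sequence $(\lambda_n)$, $\Lambda_n=(\lambda_0,\dots,\lambda_n)$ and $\Phi_{\Lambda_n}=\Phi_{(\lambda_0,\dots,\lambda_n)}$. *)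

theory Defs
  imports "HOL-Analysis.Analysis" "HOL-Library.Extended_Real"
begin

text \<open>Fundamental function of a finite list of complex numbers, defined by the contour
integral over the positively oriented circle of radius R around 0, written out via the
parametrisation w(t) = R e^{it}, t in [0, 2 pi]. We take the specific radius
R = 1 + sum of the moduli, which exceeds the maximal modulus (the value of the integral
does not depend on the admissible radius).\<close>

definition fund_radius :: "complex list \<Rightarrow> real" where
  "fund_radius ls = 1 + sum_list (map norm ls)"

definition fund_fun :: "complex list \<Rightarrow> complex \<Rightarrow> complex" where
  "fund_fun ls z =
     (let R = fund_radius ls;
          w = (\<lambda>t::real. complex_of_real R * exp (\<i> * complex_of_real t))
      in (1 / (2 * complex_of_real pi * \<i>)) *
         integral {0..2*pi}
           (\<lambda>t. exp (z * w t) / (\<Prod>l\<leftarrow>ls. (w t - l)) * (\<i> * w t)))"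

definition Phi_seq :: "(nat \<Rightarrow> complex) \<Rightarrow> nat \<Rightarrow> complex \<Rightarrow> complex" where
  "Phi_seq lam n = fund_fun (map lam [0..<Suc n])"

end

theory Submission
  imports Defs
begin

text \<open>
  Expanding 1 / ((w - l_0) \<cdots> (w - l_n)) as a power series in 1/w on the
  circle of integration and integrating termwise shows that the fundamental function has
  the Taylor expansion  Phi_{(l_0,...,l_n)}(z) = \<Sum>_k c_k z^k / k!,  where the c_k
  (complete homogeneous sums of the l_j) satisfy a simple recursion.  That recursion is
  monotone, so if |lam_j| \<le> C + j b for all j, the coefficients are dominated by those of
  the arithmetic progression C, C + b, ..., C + n b, whose fundamental function is given
  in closed form by finite differences of exponentials.  This yields, for |z| \<le> r,
      |Phi_{Lambda_n}(z)| \<le> e^{C r} ((e^{b r} - 1) / b)^n / n!.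
  On a compact subset of the disc of radius ln(1 + \<beta> R*)/\<beta> we have r with
  (e^{\<beta> r} - 1)/\<beta> < R*, and we may enlarge \<beta> to some b and choose R1 < R* with
  (e^{b r} - 1)/b < R1; since |a_n|/n! \<le> R1^{-n} eventually, the series is dominated by a
  convergent geometric series, and the Weierstrass M-test concludes.
\<close>

subsection \<open>The coefficients of the expansion of 1 / \<Prod>(w - l)\<close>

text \<open>fund_coeff ls k is the coefficient of w^-(k+1) in the expansion of 1/\<Prod>_{l \<in> ls}(w - l)
  at infinity; for ls = [l_0, ..., l_n] it is the complete homogeneous symmetric polynomial
  of degree k - n in the l_j.  The recursion expresses multiplication by 1/(w - l).\<close>

fun fund_coeff :: "'a::comm_ring_1 list \<Rightarrow> nat \<Rightarrow> 'a" where
  "fund_coeff [] k = 0"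
| "fund_coeff (l # ls) 0 = (if ls = [] then 1 else 0)"
| "fund_coeff (l # ls) (Suc k) = l * fund_coeff (l # ls) k + fund_coeff ls k"

lemma fund_coeff_single: "fund_coeff [l] k = l ^ k"
  by (induction k) auto

lemma fund_coeff_Cons_Suc:
  assumes "ls \<noteq> []"
  shows "fund_coeff (l # ls) (Suc k) = (\<Sum>i\<le>k. l ^ i * fund_coeff ls (k - i))"
proof (induction k)
  case 0
  then show ?case using assms by simp
next
  case (Suc k)
  have "fund_coeff (l # ls) (Suc (Suc k)) =
      l * (\<Sum>i\<le>k. l ^ i * fund_coeff ls (k - i)) + fund_coeff ls (Suc k)"
    using Suc by simp
  also have "\<dots> = (\<Sum>i\<le>k. l ^ Suc i * fund_coeff ls (Suc k - Suc i)) + l ^ 0 * fund_coeff ls (Suc k - 0)"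
    by (simp add: sum_distrib_left mult.assoc)
  also have "\<dots> = (\<Sum>i\<le>Suc k. l ^ i * fund_coeff ls (Suc k - i))"
    by (subst sum.atMost_Suc_shift) simp
  finally show ?case .
qed

lemma fund_coeff_Cons_Suc_divide:
  fixes w :: "'a::field"
  assumes "ls \<noteq> []"
  shows "(\<Sum>i\<le>k. l ^ i / w ^ (i + 1) * (fund_coeff ls (k - i) / w ^ (k - i + 1))) =
         fund_coeff (l # ls) (Suc k) / w ^ (Suc k + 1)"
proof -
  have "(\<Sum>i\<le>k. l ^ i / w ^ (i + 1) * (fund_coeff ls (k - i) / w ^ (k - i + 1))) =
        (\<Sum>i\<le>k. l ^ i * fund_coeff ls (k - i) / w ^ (k + 2))"
  proof (rule sum.cong)
    fix i assume "i \<in> {..k}"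
    then have "w ^ (i + 1) * w ^ (k - i + 1) = w ^ (k + 2)"
      by (simp add: power_add[symmetric])
    then show "l ^ i / w ^ (i + 1) * (fund_coeff ls (k - i) / w ^ (k - i + 1)) =
               l ^ i * fund_coeff ls (k - i) / w ^ (k + 2)"
      by (simp add: field_simps)
  qed simp
  also have "\<dots> = fund_coeff (l # ls) (Suc k) / w ^ (Suc k + 1)"
    using fund_coeff_Cons_Suc[OF assms] by (simp add: sum_divide_distrib)
  finally show ?thesis .
qed

lemma Cauchy_product_abs_summable:
  fixes a b :: "nat \<Rightarrow> 'a::{real_normed_algebra,banach}"
  assumes "summable (\<lambda>k. norm (a k))" and "summable (\<lambda>k. norm (b k))"
  shows "summable (\<lambda>k. norm (\<Sum>i\<le>k. a i * b (k - i)))"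
proof (rule summable_comparison_test'[where N = 0])
  show "summable (\<lambda>k. \<Sum>i\<le>k. norm (a i) * norm (b (k - i)))"
    using summable_Cauchy_product[of "\<lambda>k. norm (a k)" "\<lambda>k. norm (b k)"] assms by simp
  show "norm (norm (\<Sum>i\<le>k. a i * b (k - i))) \<le> (\<Sum>i\<le>k. norm (a i) * norm (b (k - i)))" for k
    by (simp add: order_trans[OF norm_sum] sum_mono norm_mult_ineq)
qed

lemma inverse_linear_series:
  fixes l w :: complex
  assumes lw: "norm l < norm w"
  shows "summable (\<lambda>k. norm (l ^ k / w ^ (k + 1))) \<and> (\<lambda>k. l ^ k / w ^ (k + 1)) sums (1 / (w - l))"
proof
  have w0: "w \<noteq> 0" and wl: "w - l \<noteq> 0" using lw by auto
  have q: "norm (l / w) < 1" using lw w0 by (simp add: norm_divide divide_less_eq)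
  have eq: "(l / w) ^ k / w = l ^ k / w ^ (k + 1)" for k by (simp add: power_divide)
  have "summable (\<lambda>k. norm (l / w) ^ k / norm w)"
    using q by (intro summable_divide summable_geometric) simp
  moreover have "norm (l ^ k / w ^ (k + 1)) = norm (l / w) ^ k / norm w" for k
    by (simp add: norm_divide norm_power power_divide norm_mult)
  ultimately show "summable (\<lambda>k. norm (l ^ k / w ^ (k + 1)))"
    by simp
  have "(\<lambda>k. (l / w) ^ k / w) sums (1 / (1 - l / w) / w)"
    using geometric_sums[OF q] by (rule sums_divide)
  moreover have "1 / (1 - l / w) / w = 1 / (w - l)" using w0 wl by (simp add: field_simps)
  ultimately show "(\<lambda>k. l ^ k / w ^ (k + 1)) sums (1 / (w - l))" by (simp add: eq)
qed

lemma inverse_prod_series: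
  fixes w :: complex
  assumes "ls \<noteq> []" and "\<And>l. l \<in> set ls \<Longrightarrow> norm l < norm w"
  shows "summable (\<lambda>k. norm (fund_coeff ls k / w ^ (k + 1))) \<and>
         (\<lambda>k. fund_coeff ls k / w ^ (k + 1)) sums (1 / (\<Prod>l\<leftarrow>ls. (w - l)))"
  using assms
proof (induction ls)
  case Nil
  then show ?case by simp
next
  case (Cons l ls)
  define a where "a = (\<lambda>k. l ^ k / w ^ (k + 1))"
  have geo: "summable (\<lambda>k. norm (a k))" "a sums (1 / (w - l))"
    using inverse_linear_series[of l w] Cons.prems by (auto simp: a_def)
  show ?case
  proof (cases "ls = []")
    case True
    then show ?thesis using geo by (simp add: fund_coeff_single a_def)
  next
    case False
    define b where "b = (\<lambda>k. fund_coeff ls k / w ^ (k + 1))"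
    have IH: "summable (\<lambda>k. norm (b k))" "b sums (1 / (\<Prod>l\<leftarrow>ls. (w - l)))"
      using Cons.IH[OF False] Cons.prems by (auto simp: b_def)
    have conv: "(\<Sum>i\<le>k. a i * b (k - i)) = fund_coeff (l # ls) (Suc k) / w ^ (Suc k + 1)" for k
      unfolding a_def b_def by (rule fund_coeff_Cons_Suc_divide[OF False])
    have "(\<Sum>k. a k) = 1 / (w - l)" "(\<Sum>k. b k) = 1 / (\<Prod>l\<leftarrow>ls. (w - l))"
      using geo(2) IH(2) sums_unique by metis+
    then have "(\<lambda>k. fund_coeff (l # ls) (Suc k) / w ^ (Suc k + 1)) sums (1 / (\<Prod>l\<leftarrow>l # ls. (w - l)))"
      using Cauchy_product_sums[OF geo(1) IH(1)] by (simp add: conv)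
    then have "(\<lambda>k. fund_coeff (l # ls) k / w ^ (k + 1)) sums (1 / (\<Prod>l\<leftarrow>l # ls. (w - l)))"
      using False sums_Suc_iff[of "\<lambda>k. fund_coeff (l # ls) k / w ^ (k + 1)"] by simp
    moreover have "summable (\<lambda>k. norm (fund_coeff (l # ls) (Suc k) / w ^ (Suc k + 1)))"
      using Cauchy_product_abs_summable[OF geo(1) IH(1)] by (simp add: conv)
    then have "summable (\<lambda>k. norm (fund_coeff (l # ls) k / w ^ (k + 1)))"
      by (subst summable_Suc_iff[symmetric])
    ultimately show ?thesis by simp
  qed
qed

subsection \<open>Termwise integration and the Taylor expansion of the fundamental function\<close>

lemma has_integral_series_M_test:
  fixes f :: "nat \<Rightarrow> real \<Rightarrow> complex"
  assumes cont: "\<And>n. continuous_on {a..b} (f n)"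
    and bd: "\<And>n t. t \<in> {a..b} \<Longrightarrow> norm (f n t) \<le> M n" and sm: "summable M"
  shows "\<exists>I. (\<lambda>n. integral {a..b} (f n)) sums I \<and> ((\<lambda>t. \<Sum>n. f n t) has_integral I) {a..b}"
proof -
  have U: "uniform_limit (cbox a b) (\<lambda>N t. \<Sum>n<N. f n t) (\<lambda>t. \<Sum>n. f n t) sequentially"
    using Weierstrass_m_test[of "cbox a b" f M] bd sm by auto
  have C: "continuous_on (cbox a b) (\<lambda>t. \<Sum>n<N. f n t)" for N
    using cont by (auto intro!: continuous_on_sum)
  obtain I J where IJ: "\<And>N. ((\<lambda>t. \<Sum>n<N. f n t) has_integral I N) (cbox a b)"
    "((\<lambda>t. \<Sum>n. f n t) has_integral J) (cbox a b)" "I \<longlonglongrightarrow> J"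
    using uniform_limit_integral_cbox[OF U C] by auto
  have fi: "(f n has_integral integral {a..b} (f n)) {a..b}" for n
    using cont integrable_continuous_real integrable_integral by blast
  have "I N = (\<Sum>n<N. integral {a..b} (f n))" for N
  proof -
    have "((\<lambda>t. \<Sum>n<N. f n t) has_integral (\<Sum>n<N. integral {a..b} (f n))) {a..b}"
      using fi by (intro has_integral_sum) auto
    then show ?thesis using IJ(1)[of N] has_integral_unique by (metis cbox_interval)
  qed
  then have "I = (\<lambda>N. \<Sum>n<N. integral {a..b} (f n))" by (simp add: fun_eq_iff)
  then have "(\<lambda>n. integral {a..b} (f n)) sums J" using IJ(3) unfolding sums_def by simp
  then show ?thesis using IJ(2) by (auto simp: cbox_interval)
qed

definition circ :: "real \<Rightarrow> real \<Rightarrow> complex" where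
  "circ R t = complex_of_real R * exp (\<i> * complex_of_real t)"

lemma norm_circ: "R > 0 \<Longrightarrow> norm (circ R t) = R"
  by (simp add: circ_def norm_mult)

lemma circ_nonzero: "R > 0 \<Longrightarrow> circ R t \<noteq> 0"
  by (simp add: circ_def)

lemma continuous_on_circ [continuous_intros]: "continuous_on S (circ R)"
  unfolding circ_def by (intro continuous_intros)

lemma circ_power_quotient:
  assumes "R > 0"
  shows "circ R t ^ j / circ R t ^ k =
     complex_of_real (R ^ j / R ^ k) * exp (\<i> * of_int (int j - int k) * complex_of_real t)"
proof -
  have e: "exp (\<i> * complex_of_real t) ^ n = exp (of_nat n * (\<i> * complex_of_real t))" for n
    by (simp add: exp_of_nat_mult)
  have "exp (\<i> * of_int (int j - int k) * complex_of_real t) =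
        exp (of_nat j * (\<i> * complex_of_real t)) / exp (of_nat k * (\<i> * complex_of_real t))"
    by (simp add: exp_diff[symmetric] algebra_simps)
  then show ?thesis using assms
    by (simp add: circ_def power_mult_distrib e)
qed

lemma integral_exp_int_multiple:
  fixes m :: int
  assumes "m \<noteq> 0"
  shows "((\<lambda>t. exp (\<i> * of_int m * complex_of_real t)) has_integral 0) {0..2*pi}"
proof -
  let ?c = "\<i> * of_int m :: complex"
  have c0: "?c \<noteq> 0" using assms by simp
  define F where "F = (\<lambda>u::complex. exp (?c * u) / ?c)"
  have D: "(F has_field_derivative exp (?c * u)) (at u)" for u
    unfolding F_def using c0 by (auto intro!: derivative_eq_intros)
  have "((\<lambda>t. exp (?c * complex_of_real t)) has_integral
          (F (of_real (2*pi)) - F (of_real 0))) {0..2*pi}"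
    by (rule fundamental_theorem_of_calculus) (auto intro!: has_vector_derivative_real_field D)
  moreover have "F (of_real (2*pi)) - F (of_real 0) = 0"
  proof -
    have "exp (?c * of_real (2*pi)) = exp ((2 * of_int m * pi) * \<i>)"
      by (simp add: algebra_simps)
    also have "\<dots> = 1" by (rule exp_integer_2pi) simp
    finally show ?thesis by (simp add: F_def)
  qed
  ultimately show ?thesis by simp
qed

lemma circ_power_quotient_integral:
  assumes R: "R > 0"
  shows "((\<lambda>t. circ R t ^ j / circ R t ^ k) has_integral (if j = k then complex_of_real (2 * pi) else 0)) {0..2*pi}"
proof (cases "j = k")
  case True
  then show ?thesis using circ_nonzero[OF R] has_integral_const_real[of "1::complex" 0 "2*pi"]
    by (simp add: scaleR_conv_of_real)
next
  case False
  have "((\<lambda>t. complex_of_real (R ^ j / R ^ k) *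
                 exp (\<i> * of_int (int j - int k) * complex_of_real t)) has_integral 0) {0..2*pi}"
    using has_integral_mult_right[OF integral_exp_int_multiple[of "int j - int k"]] False
    by (simp only: mult_zero_right)
  then show ?thesis using False by (simp only: circ_power_quotient[OF R] if_False)
qed

lemma circ_integral_exp_div_power:
  fixes z :: complex
  assumes R: "R > 0"
  shows "((\<lambda>t. exp (z * circ R t) / circ R t ^ k) has_integral (2 * pi * z ^ k / fact k)) {0..2*pi}"
proof -
  define f where "f = (\<lambda>j t. z ^ j / fact j * (circ R t ^ j / circ R t ^ k))"
  define M where "M = (\<lambda>j. (norm z * R) ^ j / fact j / R ^ k)"
  have cont: "continuous_on {0..2*pi} (f j)" for j
    unfolding f_def using circ_nonzero[OF R] by (auto intro!: continuous_intros)
  have bd: "norm (f j t) \<le> M j" for j t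
    unfolding f_def M_def using R
    by (simp add: norm_mult norm_divide norm_power norm_circ power_mult_distrib)
  have "summable (\<lambda>j. (norm z * R) ^ j /\<^sub>R fact j)"
    using exp_converges[of "norm z * R"] sums_summable by blast
  then have sm: "summable M"
    unfolding M_def by (intro summable_divide) (simp add: divide_inverse_commute)
  obtain I where I: "(\<lambda>j. integral {0..2*pi} (f j)) sums I"
    "((\<lambda>t. \<Sum>j. f j t) has_integral I) {0..2*pi}"
    using has_integral_series_M_test[OF cont bd sm] by blast
  have pointwise: "(\<Sum>j. f j t) = exp (z * circ R t) / circ R t ^ k" for t
  proof -
    have "(\<lambda>j. (z * circ R t) ^ j /\<^sub>R fact j / circ R t ^ k) sums (exp (z * circ R t) / circ R t ^ k)"
      using exp_converges by (rule sums_divide)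
    moreover have "(z * circ R t) ^ j /\<^sub>R fact j / circ R t ^ k = f j t" for j
      by (simp add: f_def scaleR_conv_of_real power_mult_distrib field_simps)
    ultimately show ?thesis using sums_unique by fastforce
  qed
  have "integral {0..2*pi} (f j) = (if j = k then 2 * pi * z ^ k / fact k else 0)" for j
    using has_integral_mult_right[OF circ_power_quotient_integral[OF R, of j k], of "z ^ j / fact j"]
    by (auto simp: f_def integral_unique)
  then have "(\<lambda>j. integral {0..2*pi} (f j)) sums (2 * pi * z ^ k / fact k)"
    using sums_single[of k "\<lambda>j. 2 * pi * z ^ j / fact j"] by (simp cong: if_cong)
  then have "I = 2 * pi * z ^ k / fact k" using I(1) sums_unique2 by blast
  then show ?thesis using I(2) pointwise by simp
qed

lemma norm_le_sum_list: "l \<in> set ls \<Longrightarrow> norm l \<le> sum_list (map norm ls)"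
proof (induction ls)
  case (Cons x xs)
  have "0 \<le> sum_list (map norm xs)" by (induction xs) auto
  then show ?case using Cons by (auto intro: add_increasing)
qed simp

lemma norm_less_fund_radius: "l \<in> set ls \<Longrightarrow> norm l < fund_radius ls"
  using norm_le_sum_list[of l ls] by (simp add: fund_radius_def)

lemma fund_radius_pos: "fund_radius ls > 0"
proof -
  have "0 \<le> sum_list (map norm ls)" by (induction ls) auto
  then show ?thesis by (simp add: fund_radius_def)
qed

lemma fund_integrand_series:
  fixes z :: complex
  assumes ne: "ls \<noteq> []" and R0: "R > 0" and Rs: "\<forall>l\<in>set ls. norm l < R"
  shows "(\<lambda>k. \<i> * fund_coeff ls k * (exp (z * circ R t) / circ R t ^ k)) sums
           (exp (z * circ R t) / (\<Prod>l\<leftarrow>ls. (circ R t - l)) * (\<i> * circ R t))"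
    and "norm (\<i> * fund_coeff ls k * (exp (z * circ R t) / circ R t ^ k)) \<le>
           exp (norm z * R) * R * norm (fund_coeff ls k / (complex_of_real R) ^ (k + 1))"
proof -
  let ?w = "circ R t"
  have "(\<lambda>k. fund_coeff ls k / ?w ^ (k + 1)) sums (1 / (\<Prod>l\<leftarrow>ls. (?w - l)))"
    using inverse_prod_series[OF ne, of ?w] Rs R0 by (simp add: norm_circ)
  then have "(\<lambda>k. fund_coeff ls k / ?w ^ (k + 1) * (exp (z * ?w) * (\<i> * ?w))) sums
      (1 / (\<Prod>l\<leftarrow>ls. (?w - l)) * (exp (z * ?w) * (\<i> * ?w)))"
    by (rule sums_mult2)
  moreover have "fund_coeff ls k / ?w ^ (k + 1) * (exp (z * ?w) * (\<i> * ?w)) =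
      \<i> * fund_coeff ls k * (exp (z * ?w) / ?w ^ k)" for k
    using circ_nonzero[OF R0] by (simp add: field_simps)
  ultimately show "(\<lambda>k. \<i> * fund_coeff ls k * (exp (z * ?w) / ?w ^ k)) sums
           (exp (z * ?w) / (\<Prod>l\<leftarrow>ls. (?w - l)) * (\<i> * ?w))"
    by simp
  have "norm (exp (z * ?w)) \<le> exp (norm z * R)"
    using norm_exp[of "z * ?w"] R0 by (simp add: norm_mult norm_circ)
  then have "norm (\<i> * fund_coeff ls k * (exp (z * ?w) / ?w ^ k)) \<le> norm (fund_coeff ls k) * exp (norm z * R) / R ^ k"
    using R0 by (simp add: norm_mult norm_divide norm_power norm_circ divide_right_mono mult_left_mono)
  also have "\<dots> = exp (norm z * R) * R * norm (fund_coeff ls k / (complex_of_real R) ^ (k + 1))"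
    using R0 by (simp add: norm_divide norm_power norm_mult field_simps)
  finally show "norm (\<i> * fund_coeff ls k * (exp (z * ?w) / ?w ^ k)) \<le>
           exp (norm z * R) * R * norm (fund_coeff ls k / (complex_of_real R) ^ (k + 1))" .
qed

text \<open>Obtained by integrating the expansion of the
  integrand termwise, using Cauchy's formula for the Taylor coefficients of exp.\<close>
lemma fund_fun_taylor:
  fixes z :: complex
  assumes ne: "ls \<noteq> []"
  shows "(\<lambda>k. fund_coeff ls k * z ^ k / fact k) sums fund_fun ls z"
proof -
  define R where "R = fund_radius ls"
  have Rs: "\<forall>l\<in>set ls. norm l < R" and R0: "R > 0"
    using norm_less_fund_radius fund_radius_pos by (auto simp: R_def)
  define c where "c = 1 / (2 * complex_of_real pi * \<i>)"
  define f where "f = (\<lambda>k t. \<i> * fund_coeff ls k * (exp (z * circ R t) / circ R t ^ k))"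
  have cont: "continuous_on {0..2*pi} (f k)" for k
    unfolding f_def using circ_nonzero[OF R0] by (auto intro!: continuous_intros)
  have "summable (\<lambda>k. norm (fund_coeff ls k / (complex_of_real R) ^ (k + 1)))"
    using inverse_prod_series[OF ne, of "complex_of_real R"] Rs R0 by simp
  then have sm: "summable (\<lambda>k. exp (norm z * R) * R * norm (fund_coeff ls k / (complex_of_real R) ^ (k + 1)))"
    by (intro summable_mult)
  have bd: "norm (f k t) \<le> exp (norm z * R) * R * norm (fund_coeff ls k / (complex_of_real R) ^ (k + 1))"
    for k t unfolding f_def by (rule fund_integrand_series(2)[OF ne R0 Rs])
  obtain I where I: "(\<lambda>k. integral {0..2*pi} (f k)) sums I"
    "((\<lambda>t. \<Sum>k. f k t) has_integral I) {0..2*pi}"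
    using has_integral_series_M_test[OF cont bd sm] by blast
  have "fund_fun ls z =
      c * integral {0..2*pi} (\<lambda>t. exp (z * circ R t) / (\<Prod>l\<leftarrow>ls. (circ R t - l)) * (\<i> * circ R t))"
    by (simp add: fund_fun_def R_def circ_def c_def Let_def)
  also have "\<dots> = c * I"
    using I(2) sums_unique[OF fund_integrand_series(1)[OF ne R0 Rs]]
    by (simp add: f_def integral_unique)
  finally have fund: "fund_fun ls z = c * I" .
  have "integral {0..2*pi} (f k) = \<i> * fund_coeff ls k * (2 * pi * z ^ k / fact k)" for k
    unfolding f_def
    using has_integral_mult_right[OF circ_integral_exp_div_power[OF R0, of z k], of "\<i> * fund_coeff ls k"]
    by (simp add: integral_unique)
  then have "c * integral {0..2*pi} (f k) = fund_coeff ls k * z ^ k / fact k" for k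
    by (simp add: c_def field_simps)
  moreover have "(\<lambda>k. c * integral {0..2*pi} (f k)) sums (c * I)"
    using I(1) by (rule sums_mult)
  ultimately show ?thesis using fund by simp
qed

subsection \<open>A majorant for Phi_{Lambda_n}\<close>

lemma fund_coeff_norm_le:
  fixes ls :: "complex list" and cs :: "real list"
  assumes "list_all2 (\<lambda>l c. norm l \<le> c) ls cs"
  shows "norm (fund_coeff ls k) \<le> fund_coeff cs k"
  using assms
proof (induction ls arbitrary: cs k)
  case Nil
  then show ?case by simp
next
  case (Cons l ls)
  obtain c cs' where cs: "cs = c # cs'" and lc: "norm l \<le> c"
    and rest: "list_all2 (\<lambda>l c. norm l \<le> c) ls cs'"
    using Cons.prems by (cases cs) auto
  have same_empty: "ls = [] \<longleftrightarrow> cs' = []" using rest list_all2_lengthD by fastforce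
  show ?case unfolding cs
  proof (induction k)
    case 0
    then show ?case using same_empty by simp
  next
    case (Suc k)
    have "norm (fund_coeff (l # ls) (Suc k)) \<le> norm l * norm (fund_coeff (l # ls) k) + norm (fund_coeff ls k)"
      by (simp add: norm_mult order_trans[OF norm_triangle_ineq])
    also have "\<dots> \<le> c * fund_coeff (c # cs') k + fund_coeff cs' k"
      using Suc.IH Cons.IH[OF rest, of k] lc order_trans[OF norm_ge_zero lc]
      by (intro add_mono mult_mono) auto
    finally show ?case by simp
  qed
qed

definition fwd_diff_pow :: "real \<Rightarrow> real \<Rightarrow> nat \<Rightarrow> nat \<Rightarrow> real" where
  "fwd_diff_pow C b n k = (\<Sum>i\<le>n. of_nat (n choose i) * (-1) ^ (n - i) * (C + real i * b) ^ k)"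

lemma fwd_diff_pow_0: "fwd_diff_pow C b (Suc m) 0 = 0"
proof -
  have "(-1 + 1 :: real) ^ Suc m = (\<Sum>i\<le>Suc m. of_nat (Suc m choose i) * 1 ^ i * (-1) ^ (Suc m - i))"
    using binomial_ring[of "1::real" "-1" "Suc m"] by (simp add: add.commute)
  then show ?thesis by (simp add: fwd_diff_pow_def)
qed

text \<open>The forward differences obey (up to the normalisation n! b^n) the same recursion as
  fund_coeff for the nodes C + j b, listed from j = n down to j = 0.\<close>
lemma fwd_diff_pow_Suc:
  "fwd_diff_pow C b (Suc m) (Suc k) =
     (C + real (Suc m) * b) * fwd_diff_pow C b (Suc m) k + real (Suc m) * b * fwd_diff_pow C b m k"
proof -
  let ?c = "C + real (Suc m) * b"
  let ?t = "\<lambda>n i k. of_nat (n choose i) * (-1) ^ (n - i) * (C + real i * b) ^ k"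
  define T where "T = (\<lambda>i. if i \<le> m then real (Suc m) * b * ?t m i k else 0)"
  have term_split: "?t (Suc m) i (Suc k) = ?c * ?t (Suc m) i k + T i" if "i \<le> Suc m" for i
  proof (cases "i = Suc m")
    case True
    then show ?thesis by (simp add: T_def)
  next
    case False
    then have im: "i \<le> m" using that by simp
    have absorb: "real (Suc m - i) * real (Suc m choose i) = real (Suc m) * real (m choose i)"
      using binomial_absorb_comp[of "Suc m" i] by (metis diff_Suc_1 of_nat_mult)
    have diff: "real (Suc m - i) = real (Suc m) - real i" using im by (simp add: of_nat_diff)
    have sign: "(-1::real) ^ (Suc m - i) = - ((-1) ^ (m - i))" using im by (simp add: Suc_diff_le)
    have "?t (Suc m) i (Suc k) - ?c * ?t (Suc m) i k
        = - (real (Suc m) - real i) * b * of_nat (Suc m choose i) * (-1) ^ (Suc m - i) * (C + real i * b) ^ k"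
      by (simp add: algebra_simps)
    also have "\<dots> = (real (Suc m - i) * real (Suc m choose i)) * b * (-1) ^ (m - i) * (C + real i * b) ^ k"
      by (simp add: diff sign algebra_simps)
    also have "\<dots> = T i" unfolding absorb T_def using im by simp
    finally show ?thesis by simp
  qed
  have "fwd_diff_pow C b (Suc m) (Suc k) = (\<Sum>i\<le>Suc m. ?c * ?t (Suc m) i k + T i)"
    unfolding fwd_diff_pow_def by (rule sum.cong) (use term_split in auto)
  also have "\<dots> = ?c * fwd_diff_pow C b (Suc m) k + (\<Sum>i\<le>Suc m. T i)"
    unfolding sum.distrib fwd_diff_pow_def sum_distrib_left by simp
  also have "(\<Sum>i\<le>Suc m. T i) = real (Suc m) * b * fwd_diff_pow C b m k"
    by (simp add: T_def fwd_diff_pow_def sum_distrib_left)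
  finally show ?thesis .
qed

lemma fund_coeff_arith_progression:
  fixes C b :: real
  assumes b0: "b \<noteq> 0"
  defines "c \<equiv> (\<lambda>j. C + real j * b)"
  shows "fund_coeff (rev (map c [0..<Suc n])) k = fwd_diff_pow C b n k / (fact n * b ^ n)"
proof (induction n arbitrary: k)
  case 0
  then show ?case by (simp add: fund_coeff_single fwd_diff_pow_def c_def)
next
  case (Suc m)
  note outer_IH = Suc.IH
  have rv: "rev (map c [0..<Suc (Suc m)]) = c (Suc m) # rev (map c [0..<Suc m])" by simp
  show ?case
  proof (induction k)
    case 0
    then show ?case unfolding rv by (simp add: fwd_diff_pow_0)
  next
    case (Suc k)
    define D where "D = fact m * b ^ m"
    have D0: "D \<noteq> 0" and s0: "real (Suc m) * b \<noteq> 0" using b0 by (simp_all add: D_def)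
    have fD: "fact (Suc m) * b ^ Suc m = (real (Suc m) * b) * D"
      by (simp add: D_def algebra_simps)
    have "fund_coeff (rev (map c [0..<Suc (Suc m)])) (Suc k) =
        c (Suc m) * fund_coeff (rev (map c [0..<Suc (Suc m)])) k + fund_coeff (rev (map c [0..<Suc m])) k"
      unfolding rv by simp
    also have "\<dots> = c (Suc m) * (fwd_diff_pow C b (Suc m) k / (fact (Suc m) * b ^ Suc m))
                    + fwd_diff_pow C b m k / D"
      using Suc.IH outer_IH by (simp add: D_def)
    also have "\<dots> = fwd_diff_pow C b (Suc m) (Suc k) / (fact (Suc m) * b ^ Suc m)"
      unfolding fwd_diff_pow_Suc fD c_def using D0 s0 by (simp add: divide_simps)
    finally show ?case .
  qed
qed

lemma fwd_diff_pow_exp_series: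
  fixes C b r :: real
  shows "(\<lambda>k. fwd_diff_pow C b n k * r ^ k / fact k) sums (exp (C * r) * (exp (b * r) - 1) ^ n)"
proof -
  define co where "co = (\<lambda>i. of_nat (n choose i) * (-1::real) ^ (n - i))"
  have "(\<lambda>k. \<Sum>i\<le>n. co i * (((C + real i * b) * r) ^ k / fact k)) sums
          (\<Sum>i\<le>n. co i * exp ((C + real i * b) * r))"
  proof (rule sums_sum)
    fix i
    have "(\<lambda>k. ((C + real i * b) * r) ^ k / fact k) sums exp ((C + real i * b) * r)"
      using exp_converges[of "(C + real i * b) * r"] by (simp add: divide_inverse_commute)
    then show "(\<lambda>k. co i * (((C + real i * b) * r) ^ k / fact k)) sums (co i * exp ((C + real i * b) * r))"
      by (rule sums_mult)
  qed
  moreover have "(\<Sum>i\<le>n. co i * (((C + real i * b) * r) ^ k / fact k)) = fwd_diff_pow C b n k * r ^ k / fact k" for k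
    unfolding fwd_diff_pow_def co_def
    by (simp add: sum_distrib_right sum_divide_distrib power_mult_distrib mult.assoc)
  moreover have "(\<Sum>i\<le>n. co i * exp ((C + real i * b) * r)) = exp (C * r) * (exp (b * r) - 1) ^ n"
  proof -
    have "(exp (b * r) + -1) ^ n = (\<Sum>i\<le>n. of_nat (n choose i) * exp (b * r) ^ i * (-1) ^ (n - i))"
      by (rule binomial_ring)
    moreover have "exp ((C + real i * b) * r) = exp (C * r) * exp (b * r) ^ i" for i
      by (simp add: exp_add[symmetric] exp_of_nat_mult[symmetric] algebra_simps)
    ultimately show ?thesis unfolding co_def
      by (simp add: sum_distrib_left algebra_simps)
  qed
  ultimately show ?thesis by simp
qed

lemma fund_fun_rev: "fund_fun (rev ls) = fund_fun ls"
proof -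
  have "fund_radius (rev ls) = fund_radius ls"
    by (simp add: fund_radius_def rev_map[symmetric])
  moreover have "prod_list (map f (rev ls)) = prod_list (map f ls)" for f :: "complex \<Rightarrow> complex"
    by (simp add: rev_map[symmetric] prod_list.rev)
  ultimately show ?thesis unfolding fund_fun_def by simp
qed

lemma Phi_seq_bound:
  fixes lam :: "nat \<Rightarrow> complex" and b C r :: real and z :: complex
  assumes b: "b > 0" and lam: "\<And>j. norm (lam j) \<le> C + real j * b" and z: "norm z \<le> r"
  shows "norm (Phi_seq lam n z) \<le> exp (C * r) * (exp (b * r) - 1) ^ n / (fact n * b ^ n)"
proof -
  define ls where "ls = rev (map lam [0..<Suc n])"
  define c where "c = (\<lambda>j. C + real j * b)"
  define cs where "cs = rev (map c [0..<Suc n])"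
  have taylor: "(\<lambda>k. fund_coeff ls k * z ^ k / fact k) sums Phi_seq lam n z"
    using fund_fun_taylor[of ls z] by (simp add: ls_def Phi_seq_def fund_fun_rev del: upt_Suc)
  have dominated: "list_all2 (\<lambda>l c. norm l \<le> c) ls cs"
    by (simp only: ls_def cs_def list_all2_rev)
      (simp add: list_all2_conv_all_nth c_def lam del: upt_Suc)
  define majorant where "majorant = (\<lambda>k. fwd_diff_pow C b n k / (fact n * b ^ n) * r ^ k / fact k)"
  have termwise: "norm (fund_coeff ls k * z ^ k / fact k) \<le> majorant k" for k
  proof -
    have p: "norm (fund_coeff ls k) \<le> fund_coeff cs k" by (rule fund_coeff_norm_le[OF dominated])
    have "norm (fund_coeff ls k * z ^ k / fact k) = norm (fund_coeff ls k) * norm z ^ k / fact k"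
      by (simp add: norm_mult norm_divide norm_power)
    also have "\<dots> \<le> fund_coeff cs k * r ^ k / fact k"
      using p z by (intro divide_right_mono mult_mono power_mono) (auto intro: order_trans[OF norm_ge_zero p])
    also have "fund_coeff cs k = fwd_diff_pow C b n k / (fact n * b ^ n)"
      using fund_coeff_arith_progression[of b C n k] b by (simp add: cs_def c_def)
    finally show ?thesis by (simp add: majorant_def)
  qed
  have G: "majorant sums (exp (C * r) * (exp (b * r) - 1) ^ n / (fact n * b ^ n))"
    using sums_divide[OF fwd_diff_pow_exp_series[where C=C and b=b and r=r and n=n], of "fact n * b ^ n"]
    by (simp add: majorant_def field_simps)
  have "norm (\<Sum>k. fund_coeff ls k * z ^ k / fact k) \<le> (\<Sum>k. majorant k)"
    by (rule norm_suminf_le[OF termwise]) (use G sums_summable in blast)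
  then show ?thesis using taylor G by (simp add: sums_iff)
qed

subsection \<open>Choice of the parameters and the M-test\<close>

lemma compact_subset_ball_radius:
  fixes x0 :: "'a::real_normed_vector"
  assumes "compact K" "K \<subseteq> ball x0 \<rho>" "0 < \<rho>"
  obtains r where "0 \<le> r" "r < \<rho>" "\<forall>z\<in>K. norm (z - x0) \<le> r"
proof (cases "K = {}")
  case True
  then show ?thesis using that[of 0] assms(3) by simp
next
  case False
  have "continuous_on K (\<lambda>z. norm (z - x0))" by (intro continuous_intros)
  then obtain zm where zm: "zm \<in> K" "\<And>y. y \<in> K \<Longrightarrow> norm (y - x0) \<le> norm (zm - x0)"
    using continuous_attains_sup[OF assms(1) False] by blast
  moreover have "norm (zm - x0) < \<rho>"
    using assms(2) zm(1) by (auto simp: dist_norm norm_minus_commute)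
  ultimately show ?thesis using that[of "norm (zm - x0)"] by simp
qed

lemma compact_in_convergence_disc:
  fixes x0 :: complex and Rstar :: ereal
  assumes beta_pos: "\<beta> > 0" and Rstar_pos: "Rstar > 0" and "compact K"
    and K_sub: "K \<subseteq> (if Rstar = \<infinity> then UNIV else ball x0 (ln (1 + \<beta> * real_of_ereal Rstar) / \<beta>))"
  obtains r where "0 \<le> r" "\<forall>z\<in>K. norm (z - x0) \<le> r"
    and "Rstar \<noteq> \<infinity> \<Longrightarrow> (exp (\<beta> * r) - 1) / \<beta> < real_of_ereal Rstar"
proof (cases "Rstar = \<infinity>")
  case True
  obtain \<rho> where "0 < \<rho>" "K \<subseteq> ball x0 \<rho>"
    using bounded_subset_ballD compact_imp_bounded[OF \<open>compact K\<close>] by blast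
  then show ?thesis
    using compact_subset_ball_radius[OF \<open>compact K\<close>] that True by metis
next
  case False
  then obtain R where R: "Rstar = ereal R" "R > 0" using Rstar_pos by (cases Rstar) auto
  define \<rho> where "\<rho> = ln (1 + \<beta> * R) / \<beta>"
  have "\<rho> > 0" using beta_pos R(2) unfolding \<rho>_def by (intro divide_pos_pos ln_gt_zero) auto
  moreover have "K \<subseteq> ball x0 \<rho>" using K_sub R by (simp add: \<rho>_def)
  ultimately obtain r where r: "0 \<le> r" "r < \<rho>" "\<forall>z\<in>K. norm (z - x0) \<le> r"
    using compact_subset_ball_radius[OF \<open>compact K\<close>] by metis
  have "\<beta> * r < ln (1 + \<beta> * R)" using r(2) beta_pos by (simp add: \<rho>_def field_simps)
  then have "exp (\<beta> * r) < 1 + \<beta> * R"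
    using beta_pos R by (metis add_pos_pos exp_less_cancel_iff exp_ln mult_pos_pos zero_less_one)
  then have "(exp (\<beta> * r) - 1) / \<beta> < R" using beta_pos by (simp add: divide_less_eq mult.commute)
  then show ?thesis using that r R by simp
qed

text \<open>Strict inequalities for the growth parameter \<beta> survive a small increase of \<beta>;
  this leaves room for the non-strict growth hypothesis on the nodes.\<close>
lemma increase_growth_parameter:
  fixes \<beta> r R1 :: real
  assumes "\<beta> > 0" "(exp (\<beta> * r) - 1) / \<beta> < R1"
  obtains b where "b > \<beta>" "(exp (b * r) - 1) / b < R1"
proof -
  have "isCont (\<lambda>x. (exp (x * r) - 1) / x) \<beta>"
    using assms(1) by (intro continuous_intros) auto
  then have "eventually (\<lambda>x. (exp (x * r) - 1) / x < R1) (at \<beta>)"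
    using assms(2) by (intro order_tendstoD(2)) (simp_all add: isCont_def)
  then obtain d where d: "d > 0" "\<And>x. x \<noteq> \<beta> \<Longrightarrow> dist x \<beta> < d \<Longrightarrow> (exp (x * r) - 1) / x < R1"
    unfolding eventually_at by blast
  show ?thesis using that[of "\<beta> + d / 2"] d by (simp add: dist_real_def)
qed

lemma choose_majorant_parameters:
  fixes Rstar :: ereal
  assumes beta_pos: "\<beta> > 0" and Rstar_pos: "Rstar > 0"
    and disc: "Rstar \<noteq> \<infinity> \<Longrightarrow> (exp (\<beta> * r) - 1) / \<beta> < real_of_ereal Rstar"
  obtains b R1 where "b > \<beta>" "(exp (b * r) - 1) / b < R1" "ereal R1 < Rstar"
proof (cases "Rstar = \<infinity>")
  case True
  then show ?thesis using that[of "\<beta> + 1" "(exp ((\<beta> + 1) * r) - 1) / (\<beta> + 1) + 1"] by simp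
next
  case False
  then obtain R where R: "Rstar = ereal R" using Rstar_pos by (cases Rstar) auto
  obtain b where b: "b > \<beta>" "(exp (b * r) - 1) / b < R"
    using increase_growth_parameter[OF beta_pos] disc False R by auto
  moreover obtain R1 where "(exp (b * r) - 1) / b < R1" "R1 < R"
    using b(2) dense by blast
  ultimately show ?thesis using that R by simp
qed

lemma eventually_le_power_of_limsup_root:
  fixes x :: "nat \<Rightarrow> real"
  assumes nonneg: "\<And>n. x n \<ge> 0" and lim: "limsup (\<lambda>n. ereal (root n (x n))) < ereal c"
  shows "eventually (\<lambda>n. x n \<le> c ^ n) sequentially"
  using Limsup_lessD[OF lim] eventually_gt_at_top[of 0]
proof eventually_elim
  case (elim n)
  then have "root n (x n) ^ n \<le> c ^ n"
    using nonneg by (intro power_mono) (auto simp: real_root_ge_zero)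
  then show ?case using real_root_pow_pos2[OF elim(2) nonneg] by simp
qed

lemma limsup_less_inverse_radius:
  fixes L :: ereal
  assumes "R1 > 0" and "ereal R1 < inverse L"
  shows "L < ereal (1 / R1)"
proof (cases L)
  case (real x)
  show ?thesis
  proof (cases "x = 0")
    case False
    have "R1 < inverse x" using assms(2) False unfolding real by simp
    moreover from this have "x > 0" using assms(1) inverse_positive_iff_positive[of x] by linarith
    ultimately show ?thesis using real assms(1) by (simp add: field_simps)
  qed (use real assms in simp)
qed (use assms in simp_all)

lemma linear_majorant_of_limsup:
  fixes lam :: "nat \<Rightarrow> complex"
  assumes b: "b > 0" and growth: "limsup (\<lambda>n. ereal (cmod (lam n) / real n)) < ereal b"
  obtains C where "\<And>j. cmod (lam j) \<le> C + real j * b"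
proof -
  have "eventually (\<lambda>n. cmod (lam n) \<le> real n * b) sequentially"
    using Limsup_lessD[OF growth] eventually_gt_at_top[of 0]
    by eventually_elim (simp add: divide_less_eq mult.commute less_imp_le)
  then obtain N where N: "\<And>n. n \<ge> N \<Longrightarrow> cmod (lam n) \<le> real n * b"
    unfolding eventually_sequentially by blast
  define C where "C = (\<Sum>j<N. cmod (lam j))"
  have C0: "C \<ge> 0" unfolding C_def by (simp add: sum_nonneg)
  have "cmod (lam j) \<le> C + real j * b" for j
  proof (cases "j < N")
    case True
    then have "cmod (lam j) \<le> C" unfolding C_def by (intro member_le_sum) auto
    then show ?thesis using b by (simp add: add_increasing2)
  next
    case False
    then show ?thesis using N[of j] C0 by simp
  qed
  then show ?thesis by (rule that)
qed

lemma Phi_series_uniformly_convergent: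
  fixes lam a :: "nat \<Rightarrow> complex" and K :: "complex set"
  assumes b: "b > 0" and lam: "\<And>j. cmod (lam j) \<le> C + real j * b"
    and r: "0 \<le> r" and K: "\<forall>z\<in>K. norm (z - x0) \<le> r"
    and R1: "(exp (b * r) - 1) / b < R1"
    and coeff: "eventually (\<lambda>n. cmod (a n) / fact n \<le> (1 / R1) ^ n) sequentially"
  shows "uniformly_convergent_on K (\<lambda>N z. \<Sum>n<N. cmod (a n * Phi_seq lam n (z - x0))) \<and>
         uniformly_convergent_on K (\<lambda>N z. \<Sum>n<N. a n * Phi_seq lam n (z - x0))"
proof -
  define h where "h = (exp (b * r) - 1) / b"
  have h0: "h \<ge> 0" unfolding h_def using b r by simp
  have "h < R1" using R1 by (simp add: h_def)
  then have q: "0 \<le> h / R1" "h / R1 < 1" using h0 by simp_all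
  define M where "M = (\<lambda>n. exp (C * r) * (h / R1) ^ n)"
  have summable_M: "summable M" unfolding M_def using q by (intro summable_mult summable_geometric) auto
  have majorised: "eventually (\<lambda>n. \<forall>z\<in>K. norm (a n * Phi_seq lam n (z - x0)) \<le> M n) sequentially"
    using coeff
  proof eventually_elim
    case (elim n)
    show ?case
    proof
      fix z assume "z \<in> K"
      have "norm (Phi_seq lam n (z - x0)) \<le> exp (C * r) * h ^ n / fact n"
        using Phi_seq_bound[OF b lam, of "z - x0" r n] K \<open>z \<in> K\<close>
        by (simp add: h_def power_divide mult.commute)
      then have "norm (a n * Phi_seq lam n (z - x0)) \<le> cmod (a n) * (exp (C * r) * h ^ n / fact n)"
        unfolding norm_mult by (rule mult_left_mono) simp_all
      also have "\<dots> = (cmod (a n) / fact n) * (exp (C * r) * h ^ n)" by simp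
      also have "\<dots> \<le> (1 / R1) ^ n * (exp (C * r) * h ^ n)"
        using elim h0 by (intro mult_right_mono) auto
      also have "\<dots> = M n" by (simp add: M_def power_divide)
      finally show "norm (a n * Phi_seq lam n (z - x0)) \<le> M n" .
    qed
  qed
  have "uniformly_convergent_on K (\<lambda>N z. \<Sum>n<N. a n * Phi_seq lam n (z - x0))"
    by (rule Weierstrass_m_test'_ev[OF majorised summable_M])
  moreover have "uniformly_convergent_on K (\<lambda>N z. \<Sum>n<N. cmod (a n * Phi_seq lam n (z - x0)))"
    by (rule Weierstrass_m_test'_ev[OF _ summable_M]) (use majorised in simp)
  ultimately show ?thesis by blast
qed

theorem mainTheorem7:
  fixes lam a :: "nat \<Rightarrow> complex" and \<beta> :: real and Rstar :: ereal and x0 :: complex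
  assumes beta_pos: "\<beta> > 0"
    and lam_growth: "limsup (\<lambda>n. ereal (cmod (lam n) / real n)) \<le> ereal \<beta>"
    and Rstar_def: "Rstar = inverse (limsup (\<lambda>n. ereal (root n (cmod (a n) / fact n))))"
    and Rstar_pos: "Rstar > 0"
  shows "\<forall>K. compact K \<and>
             K \<subseteq> (if Rstar = \<infinity> then UNIV
                   else ball x0 (ln (1 + \<beta> * real_of_ereal Rstar) / \<beta>)) \<longrightarrow>
           uniformly_convergent_on K (\<lambda>N z. \<Sum>n<N. cmod (a n * Phi_seq lam n (z - x0))) \<and>
           uniformly_convergent_on K (\<lambda>N z. \<Sum>n<N. a n * Phi_seq lam n (z - x0))"
proof (intro allI impI, elim conjE)
  fix K :: "complex set"
  assume "compact K" and "K \<subseteq> (if Rstar = \<infinity> then UNIV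
                   else ball x0 (ln (1 + \<beta> * real_of_ereal Rstar) / \<beta>))"
  then obtain r where r: "0 \<le> r" "\<forall>z\<in>K. norm (z - x0) \<le> r"
    and disc: "Rstar \<noteq> \<infinity> \<Longrightarrow> (exp (\<beta> * r) - 1) / \<beta> < real_of_ereal Rstar"
    using compact_in_convergence_disc[OF beta_pos Rstar_pos] by metis
  obtain b R1 where b: "b > \<beta>" and R1: "(exp (b * r) - 1) / b < R1" "ereal R1 < Rstar"
    using choose_majorant_parameters[OF beta_pos Rstar_pos disc] by metis
  have b0: "b > 0" using b beta_pos by simp
  have "limsup (\<lambda>n. ereal (cmod (lam n) / real n)) < ereal b"
    using lam_growth b by (simp add: le_less_trans)
  then obtain C where lam: "\<And>j. cmod (lam j) \<le> C + real j * b"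
    using linear_majorant_of_limsup[OF b0] by metis
  have "0 \<le> (exp (b * r) - 1) / b" using b0 r by simp
  then have "R1 > 0" using R1(1) by linarith
  then have "limsup (\<lambda>n. ereal (root n (cmod (a n) / fact n))) < ereal (1 / R1)"
    using limsup_less_inverse_radius R1(2) Rstar_def by simp
  then have "eventually (\<lambda>n. cmod (a n) / fact n \<le> (1 / R1) ^ n) sequentially"
    by (intro eventually_le_power_of_limsup_root) simp_all
  then show "uniformly_convergent_on K (\<lambda>N z. \<Sum>n<N. cmod (a n * Phi_seq lam n (z - x0))) \<and>
             uniformly_convergent_on K (\<lambda>N z. \<Sum>n<N. a n * Phi_seq lam n (z - x0))"
    by (rule Phi_series_uniformly_convergent[OF b0 lam r(1) r(2) R1(1)])
qed

end
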